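(* Let $\mathbf{B}_{\iota,f}$ be a bridge from an encryption scheme $\mathscr{S}_1$ to an encryption scheme $\mathscr{S}_2$, and let $\mathscr{F}=\{\mathscr{F}_\lambda\}_\lambda$ be the ensemble of distributions of triples $(pk_1,pk_2,bk)$ produced by the bridge key generation algorithm, viewed as a $PK_1$-ensemble via the projection $(pk_1,pk_2,bk)\mapsto pk_1$. Assume that $\mathscr{S}_1$ is IND-CPA secure and that there exists an ensemble $\widetilde{\mathscr{F}}$ of $PK_1$-distributions which is polynomial-time constructible on fibers and computationally indistinguishable from $\mathscr{F}$. Then the bridge $\mathbf{B}_{\iota,f}$ is IND-CPA secure.
   Context: $\lambda$ denotes the security parameter; a function $\mu:\mathbb{N}\to[0,\infty)$ is negligible if for every positive integer $c$ there is $N_c$ with $\mu(n)<n^{-c}$ for all $n\ge N_c$. Finite distributions: a finite distribution $X$ is a probability distribution with finite support $|X|$. A morphism $\varphi:Y\to X$ is a map $|Y|\to|X|$ with $\Pr\{X=x\}=\sum_{y\in\varphi^{-1}(x)}\Pr\{Y=y\}$ for all $x$. An $X$-distribution is a pair $(Y,\varphi)$ with $\varphi:Y\to X$ a morphism; for $x$ with $\Pr\{X=x\}\neq0$, its fiber $Y|_{X=x}$ is the distribution on $\varphi^{-1}(x)$ with $\Pr\{Y|_{X=x}=y\}=\Pr\{Y=y\}/\Pr\{X=x\}$. For ensembles $\{X_\lambda\}$, an $\{X_\lambda\}$-ensemble is a family of $X_\lambda$-distributions $(Y_\lambda,\varphi_\lambda)$. It is polynomial-time constructible on fibers if there is a PPT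 algorithm $A$ such that for every $x_\lambda\in|X_\lambda|$, $A(1^\lambda,x_\lambda)$ is distributed as $Y_\lambda|_{X_\lambda=x_\lambda}$. Two ensembles $\{X_\lambda\}$, $\{Y_\lambda\}$ are computationally indistinguishable if for every PPT $D$, $|\Pr\{D(X_\lambda)=1\}-\Pr\{D(Y_\lambda)=1\}|$ is negligible in $\lambda$. An encryption scheme $\mathscr{S}=(\mathscr{P},\mathscr{C},\mathrm{KeyGen},\mathrm{Enc},\mathrm{Dec})$ consists of finite sets $\mathscr{P}$, $\mathscr{C}$ and PPT algorithms: $\mathrm{KeyGen}(1^\lambda)$ outputs $(sk,pk)$; $\mathrm{Enc}(pk,m)\in\mathscr{C}$; $\mathrm{Dec}(sk,c)\in\mathscr{P}$; with $\Pr[\mathrm{Dec}(sk,\mathrm{Enc}(pk,m))=m]=1-\mathrm{negl}(\lambda)$ for uniform $m$. A secret key is of level $\lambda$ if output by $\mathrm{KeyGen}(1^\lambda)$. $PK_1=\{PK_{1,\lambda}\}$ denotes the ensemble of distributions of public keys $pk_1$ output by $\mathrm{KeyGen}_1(1^\lambda)$. IND-CPA security: for a bit $b$ and PPT $\mathcal{A}$, $\mathrm{Exp}_b[\mathcal{A}](1^\lambda)$ runs $(pk,sk)\leftarrow\mathrm{KeyGen}(1^\lambda)$, $(m_0,m_1)\leftarrow\mathcal{A}(1^\lambda,pk)$, $ct\leftarrow\mathrm{Enc}(pk,m_b)$, returns $b'\leftarrow\mathcal{A}(ct)$; the advantage is $|\Pr[\mathrm{Exp}_0[\mathcal{A}]=1]-\Pr[\mathrm{Exp}_1[\mathcal{A}]=1]|$;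 IND-CPA secure means every PPT adversary has negligible advantage. A bridge $\mathbf{B}_{\iota,f}$ from $\mathscr{S}_1=(\mathscr{P}_1,\mathscr{C}_1,\mathrm{KeyGen}_1,\mathrm{Enc}_1,\mathrm{Dec}_1)$ to $\mathscr{S}_2=(\mathscr{P}_2,\mathscr{C}_2,\mathrm{KeyGen}_2,\mathrm{Enc}_2,\mathrm{Dec}_2)$ consists of: (1) an injective $\iota:\mathscr{P}_1\to\mathscr{P}_2$ with $\iota$ and $\iota^{-1}$ (outputting $\perp$ off the image) computable in deterministic polynomial time; (2) a PPT bridge key generation algorithm which on input $1^\lambda$ runs $\mathrm{KeyGen}_1(1^\lambda)$ to get $(sk_1,pk_1)$, then uses $sk_1$ to find a secret key $sk_2$ of level $\lambda$ for $\mathscr{S}_2$ and calls the key generation of $\mathscr{S}_2$ to produce $pk_2$, and finally on input $(sk_1,pk_1,sk_2,pk_2)$ outputs a bridge key $bk$; (3) a PPT algorithm $f$ with $f(bk,c_1)\in\mathscr{C}_2$; such that $\Pr[\mathrm{Dec}_2(sk_2,f(bk,\mathrm{Enc}_1(pk_1,m)))=\iota(m)]=1-\mathrm{negl}(\lambda)$ for uniform $m\in\mathscr{P}_1$. The associated scheme $\mathscr{G}_f$: plaintexts $\mathscr{P}_1$, ciphertexts $\mathscr{C}_1\times\mathscr{C}_2$; key generation runs the bridge key generation, secret key $(sk_1,sk_2)$, public key $(pk_1,pk_2,bk)$; $\mathrm{Enc}_{\mathscr{G}_f}(m)=(a,f(bk,b))$ with $a,b\leftarrow\mathrm{Enc}_1(pk_1,m)$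 independent; $\mathrm{Dec}_{\mathscr{G}_f}((c_1,c_2))=\mathrm{Dec}_1(sk_1,c_1)$. The bridge is IND-CPA secure if $\mathscr{G}_f$ is IND-CPA secure. *)

theory Defs
  imports "HOL-Probability.Probability"
begin

text \<open>All data (keys, plaintexts, ciphertexts, adversary states) are structured values.
  Bot plays the role of the failure symbol.\<close>
datatype val = Bits "bool list" | VPair val val | Bot

fun vfst :: "val \<Rightarrow> val" where
  "vfst (VPair a b) = a" | "vfst _ = Bot"

fun vsnd :: "val \<Rightarrow> val" where
  "vsnd (VPair a b) = b" | "vsnd _ = Bot"

definition vone :: val where "vone = Bits [True]"
definition vunit :: val where "vunit = Bits []"

text \<open>A probabilistic algorithm: on security parameter n (i.e. input 1^n) and an input,
  it returns an output distribution.\<close>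
type_synonym alg = "nat \<Rightarrow> val \<Rightarrow> val pmf"

text \<open>The class E of PPT algorithms is kept abstract; we only require the standard closure
  properties (identity, projections, constants, sequential composition, pairing).\<close>
definition eff_class :: "alg set \<Rightarrow> bool" where
  "eff_class E \<longleftrightarrow>
     (\<lambda>n x. return_pmf x) \<in> E \<and>
     (\<lambda>n x. return_pmf (vfst x)) \<in> E \<and>
     (\<lambda>n x. return_pmf (vsnd x)) \<in> E \<and>
     (\<forall>c. (\<lambda>n x. return_pmf c) \<in> E) \<and>
     (\<forall>A\<in>E. \<forall>B\<in>E. (\<lambda>n x. bind_pmf (A n x) (B n)) \<in> E) \<and>
     (\<forall>A\<in>E. \<forall>B\<in>E. (\<lambda>n x. bind_pmf (A n x) (\<lambda>a. bind_pmf (B n x) (\<lambda>b. return_pmf (VPair a b)))) \<in> E)"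

definition negligible :: "(nat \<Rightarrow> real) \<Rightarrow> bool" where
  "negligible \<mu> \<longleftrightarrow> (\<forall>n. 0 \<le> \<mu> n) \<and>
     (\<forall>c::nat. 0 < c \<longrightarrow> (\<exists>N. \<forall>n\<ge>N. \<mu> n < 1 / real n ^ c))"

definition comp_indist :: "alg set \<Rightarrow> (nat \<Rightarrow> val pmf) \<Rightarrow> (nat \<Rightarrow> val pmf) \<Rightarrow> bool" where
  "comp_indist E X Y \<longleftrightarrow> (\<forall>D\<in>E.
     negligible (\<lambda>n. \<bar>pmf (bind_pmf (X n) (D n)) vone - pmf (bind_pmf (Y n) (D n)) vone\<bar>))"

record scheme =
  Ptxt :: "val set"
  Ctxt :: "val set"
  KeyGen :: "nat \<Rightarrow> (val \<times> val) pmf"   \<comment> \<open>(sk, pk)\<close>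
  Enc :: alg                           \<comment> \<open>input VPair pk m\<close>
  Dec :: alg                           \<comment> \<open>input VPair sk c\<close>

definition correct_prob :: "scheme \<Rightarrow> nat \<Rightarrow> real" where
  "correct_prob S n = pmf
     (bind_pmf (KeyGen S n) (\<lambda>(sk, pk).
      bind_pmf (pmf_of_set (Ptxt S)) (\<lambda>m.
      bind_pmf (Enc S n (VPair pk m)) (\<lambda>c.
      bind_pmf (Dec S n (VPair sk c)) (\<lambda>m'. return_pmf (m' = m)))))) True"

definition enc_scheme :: "alg set \<Rightarrow> scheme \<Rightarrow> bool" where
  "enc_scheme E S \<longleftrightarrow>
     finite (Ptxt S) \<and> Ptxt S \<noteq> {} \<and> finite (Ctxt S) \<and>
     (\<lambda>n x. map_pmf (\<lambda>(sk, pk). VPair sk pk) (KeyGen S n)) \<in> E \<and>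
     Enc S \<in> E \<and> Dec S \<in> E \<and>
     (\<forall>n sk pk m. (sk, pk) \<in> set_pmf (KeyGen S n) \<longrightarrow> m \<in> Ptxt S \<longrightarrow>
        set_pmf (Enc S n (VPair pk m)) \<subseteq> Ctxt S) \<and>
     (\<forall>n sk pk c. (sk, pk) \<in> set_pmf (KeyGen S n) \<longrightarrow> c \<in> Ctxt S \<longrightarrow>
        set_pmf (Dec S n (VPair sk c)) \<subseteq> Ptxt S) \<and>
     negligible (\<lambda>n. 1 - correct_prob S n)"

text \<open>IND-CPA experiment. The adversary is a pair of PPT algorithms (A1, A2):
  A1 on pk outputs VPair (VPair m0 m1) st, A2 on VPair st ct outputs its guess.\<close>
definition ind_exp :: "scheme \<Rightarrow> alg \<Rightarrow> alg \<Rightarrow> bool \<Rightarrow> nat \<Rightarrow> val pmf" where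
  "ind_exp S A1 A2 b n =
     bind_pmf (KeyGen S n) (\<lambda>(sk, pk).
     bind_pmf (A1 n pk) (\<lambda>out.
     bind_pmf (Enc S n (VPair pk (if b then vsnd (vfst out) else vfst (vfst out)))) (\<lambda>ct.
     A2 n (VPair (vsnd out) ct))))"

definition ind_cpa :: "alg set \<Rightarrow> scheme \<Rightarrow> bool" where
  "ind_cpa E S \<longleftrightarrow> (\<forall>A1\<in>E. \<forall>A2\<in>E.
     negligible (\<lambda>n. \<bar>pmf (ind_exp S A1 A2 False n) vone - pmf (ind_exp S A1 A2 True n) vone\<bar>))"

record bridge =
  iota :: "val \<Rightarrow> val"
  FindSK :: alg     \<comment> \<open>input VPair sk1 pk1, output sk2\<close>
  PKGen2 :: alg     \<comment> \<open>input sk2, output pk2 (key generation of S2)\<close>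
  BKGen :: alg      \<comment> \<open>input VPair (VPair sk1 pk1) (VPair sk2 pk2), output bk\<close>
  fmap :: alg       \<comment> \<open>the algorithm f, input VPair bk c1\<close>

definition bkg :: "scheme \<Rightarrow> bridge \<Rightarrow> nat \<Rightarrow> (val \<times> val \<times> val \<times> val \<times> val) pmf" where
  "bkg S1 B n =
     bind_pmf (KeyGen S1 n) (\<lambda>(sk1, pk1).
     bind_pmf (FindSK B n (VPair sk1 pk1)) (\<lambda>sk2.
     bind_pmf (PKGen2 B n sk2) (\<lambda>pk2.
     bind_pmf (BKGen B n (VPair (VPair sk1 pk1) (VPair sk2 pk2))) (\<lambda>bk.
     return_pmf (sk1, pk1, sk2, pk2, bk)))))"

definition bridge_correct_prob :: "scheme \<Rightarrow> scheme \<Rightarrow> bridge \<Rightarrow> nat \<Rightarrow> real" where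
  "bridge_correct_prob S1 S2 B n = pmf
     (bind_pmf (bkg S1 B n) (\<lambda>(sk1, pk1, sk2, pk2, bk).
      bind_pmf (pmf_of_set (Ptxt S1)) (\<lambda>m.
      bind_pmf (Enc S1 n (VPair pk1 m)) (\<lambda>c1.
      bind_pmf (fmap B n (VPair bk c1)) (\<lambda>c2.
      bind_pmf (Dec S2 n (VPair sk2 c2)) (\<lambda>m'. return_pmf (m' = iota B m))))))) True"

definition is_bridge :: "alg set \<Rightarrow> scheme \<Rightarrow> scheme \<Rightarrow> bridge \<Rightarrow> bool" where
  "is_bridge E S1 S2 B \<longleftrightarrow>
     \<comment> \<open>(1) the embedding iota and its inverse (Bot off the image), deterministic PPT\<close>
     inj_on (iota B) (Ptxt S1) \<and> iota B ` Ptxt S1 \<subseteq> Ptxt S2 \<and>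
     (\<lambda>n x. return_pmf (iota B x)) \<in> E \<and>
     (\<lambda>n y. return_pmf (if y \<in> iota B ` Ptxt S1 then the_inv_into (Ptxt S1) (iota B) y else Bot)) \<in> E \<and>
     \<comment> \<open>(2) bridge key generation\<close>
     FindSK B \<in> E \<and> PKGen2 B \<in> E \<and> BKGen B \<in> E \<and>
     (\<forall>n sk1 pk1 sk2. (sk1, pk1) \<in> set_pmf (KeyGen S1 n) \<longrightarrow>
        sk2 \<in> set_pmf (FindSK B n (VPair sk1 pk1)) \<longrightarrow> sk2 \<in> fst ` set_pmf (KeyGen S2 n)) \<and>
     (\<forall>n sk2 pk2. sk2 \<in> fst ` set_pmf (KeyGen S2 n) \<longrightarrow>
        pk2 \<in> set_pmf (PKGen2 B n sk2) \<longrightarrow> (sk2, pk2) \<in> set_pmf (KeyGen S2 n)) \<and>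
     \<comment> \<open>(3) the algorithm f\<close>
     fmap B \<in> E \<and>
     (\<forall>n sk1 pk1 sk2 pk2 bk c1. (sk1, pk1, sk2, pk2, bk) \<in> set_pmf (bkg S1 B n) \<longrightarrow>
        c1 \<in> Ctxt S1 \<longrightarrow> set_pmf (fmap B n (VPair bk c1)) \<subseteq> Ctxt S2) \<and>
     \<comment> \<open>correctness\<close>
     negligible (\<lambda>n. 1 - bridge_correct_prob S1 S2 B n)"

text \<open>The associated scheme G_f. Public key VPair pk1 (VPair pk2 bk), secret key VPair sk1 sk2,
  ciphertext VPair c1 c2.\<close>
definition assoc_scheme :: "scheme \<Rightarrow> scheme \<Rightarrow> bridge \<Rightarrow> scheme" where
  "assoc_scheme S1 S2 B =
     \<lparr> Ptxt = Ptxt S1,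
       Ctxt = {VPair a c | a c. a \<in> Ctxt S1 \<and> c \<in> Ctxt S2},
       KeyGen = (\<lambda>n. map_pmf (\<lambda>(sk1, pk1, sk2, pk2, bk). (VPair sk1 sk2, VPair pk1 (VPair pk2 bk)))
                       (bkg S1 B n)),
       Enc = (\<lambda>n x. bind_pmf (Enc S1 n (VPair (vfst (vfst x)) (vsnd x))) (\<lambda>a.
                     bind_pmf (Enc S1 n (VPair (vfst (vfst x)) (vsnd x))) (\<lambda>b.
                     bind_pmf (fmap B n (VPair (vsnd (vsnd (vfst x))) b)) (\<lambda>c2.
                     return_pmf (VPair a c2))))),
       Dec = (\<lambda>n x. Dec S1 n (VPair (vfst (vfst x)) (vfst (vsnd x)))) \<rparr>"

definition bridge_ind_cpa :: "alg set \<Rightarrow> scheme \<Rightarrow> scheme \<Rightarrow> bridge \<Rightarrow> bool" where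
  "bridge_ind_cpa E S1 S2 B \<longleftrightarrow> ind_cpa E (assoc_scheme S1 S2 B)"

definition PK1 :: "scheme \<Rightarrow> nat \<Rightarrow> val pmf" where
  "PK1 S1 n = map_pmf snd (KeyGen S1 n)"

text \<open>The ensemble F of triples (pk1, pk2, bk), encoded as VPair pk1 (VPair pk2 bk);
  its morphism to PK1 is the projection vfst.\<close>
definition bridge_F :: "scheme \<Rightarrow> bridge \<Rightarrow> nat \<Rightarrow> val pmf" where
  "bridge_F S1 B n = map_pmf (\<lambda>(sk1, pk1, sk2, pk2, bk). VPair pk1 (VPair pk2 bk)) (bkg S1 B n)"

definition PK1_ensemble :: "scheme \<Rightarrow> (nat \<Rightarrow> val pmf) \<Rightarrow> bool" where
  "PK1_ensemble S1 Y \<longleftrightarrow> (\<forall>n. finite (set_pmf (Y n)) \<and> map_pmf vfst (Y n) = PK1 S1 n)"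

definition constructible_on_fibers :: "alg set \<Rightarrow> scheme \<Rightarrow> (nat \<Rightarrow> val pmf) \<Rightarrow> bool" where
  "constructible_on_fibers E S1 Y \<longleftrightarrow> (\<exists>A\<in>E. \<forall>n x. x \<in> set_pmf (PK1 S1 n) \<longrightarrow>
      A n x = cond_pmf (Y n) {y. vfst y = x})"

end

theory Submission
  imports Defs
begin

(* Hybrid argument. Let H(b1, b2) be the G_f experiment whose challenge is
   (Enc m_b1, f(bk, Enc m_b2)), so that the real experiment for the bit b is H(b, b) on keys
   drawn from F. Since H is efficient, replacing F by the indistinguishable ensemble F~ changes
   the outcome negligibly. On keys from F~ an adversary against S1 can complete pk1 to a full
   public key by sampling the fibre over pk1 itself, so IND-CPA security of S1 makes the steps
   H(0, 0) -> H(1, 0) -> H(1, 1) negligible; finally F~ is swapped back to F. *)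

lemma negligible_add:
  assumes "negligible f" "negligible g"
  shows "negligible (\<lambda>n. f n + g n)"
  unfolding negligible_def
proof (intro conjI allI impI)
  fix n show "0 \<le> f n + g n" using assms by (simp add: negligible_def)
next
  fix c :: nat assume "0 < c"
  obtain N1 where N1: "\<forall>n\<ge>N1. f n < 1 / real n ^ Suc c"
    using assms(1) unfolding negligible_def by blast
  obtain N2 where N2: "\<forall>n\<ge>N2. g n < 1 / real n ^ Suc c"
    using assms(2) unfolding negligible_def by blast
  show "\<exists>N. \<forall>n\<ge>N. f n + g n < 1 / real n ^ c"
  proof (intro exI allI impI)
    fix n assume n: "max (max N1 N2) 2 \<le> n"
    have "f n + g n < 1 / real n ^ Suc c + 1 / real n ^ Suc c"
      using N1 N2 n by (intro add_strict_mono) auto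
    also have "\<dots> = (2 / real n) * (1 / real n ^ c)" by simp
    also have "\<dots> \<le> 1 / real n ^ c"
      using n by (intro mult_left_le_one_le) auto
    finally show "f n + g n < 1 / real n ^ c" .
  qed
qed

lemma negligible_mono:
  assumes "negligible g" "\<And>n. 0 \<le> f n" "\<And>n. f n \<le> g n"
  shows "negligible f"
  using assms unfolding negligible_def by (meson le_less_trans)

lemma negligible_abs_diff_trans:
  assumes "negligible (\<lambda>n. \<bar>f n - g n\<bar>)" "negligible (\<lambda>n. \<bar>g n - h n\<bar>)"
  shows "negligible (\<lambda>n. \<bar>f n - h n\<bar>)"
  by (rule negligible_mono[OF negligible_add[OF assms]]) auto

lemma bind_cond_pmf_fibers:
  assumes "\<And>x. x \<in> set_pmf (map_pmf g Y) \<Longrightarrow> A x = cond_pmf Y {y. g y = x}"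
  shows "bind_pmf (map_pmf g Y) (\<lambda>x. bind_pmf (A x) K) = bind_pmf Y K"
proof -
  have "bind_pmf (map_pmf g Y) (\<lambda>x. bind_pmf (A x) K) =
      bind_pmf (bind_pmf (map_pmf g Y) (\<lambda>x. cond_pmf Y {y. g y = x})) K"
    by (auto simp: bind_assoc_pmf assms intro: bind_pmf_cong)
  also have "bind_pmf (map_pmf g Y) (\<lambda>x. cond_pmf Y {y. g y = x}) = Y"
    by (rule bind_cond_pmf_cancel) (auto simp: measure_map_pmf vimage_def eq_commute)
  finally show ?thesis .
qed

lemma set_cond_pmf_fiber:
  assumes "x \<in> set_pmf (map_pmf g Y)" "y \<in> set_pmf (cond_pmf Y {y. g y = x})"
  shows "g y = x"
  using assms by (subst (asm) set_cond_pmf) auto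

definition det_alg :: "(val \<Rightarrow> val) \<Rightarrow> alg" where
  "det_alg g = (\<lambda>n x. return_pmf (g x))"

definition precomp_alg :: "(val \<Rightarrow> val) \<Rightarrow> alg \<Rightarrow> alg" where
  "precomp_alg g A = (\<lambda>n x. A n (g x))"

definition seq_alg :: "alg \<Rightarrow> alg \<Rightarrow> alg" where
  "seq_alg A B = (\<lambda>n x. bind_pmf (A n x) (\<lambda>a. B n (VPair x a)))"

context
  fixes E assumes E: "eff_class E"
begin

lemma bind_alg_eff: "A \<in> E \<Longrightarrow> B \<in> E \<Longrightarrow> (\<lambda>n x. bind_pmf (A n x) (B n)) \<in> E"
  using E unfolding eff_class_def by blast

lemma pair_alg_eff:
  "A \<in> E \<Longrightarrow> B \<in> E \<Longrightarrow>
    (\<lambda>n x. bind_pmf (A n x) (\<lambda>a. bind_pmf (B n x) (\<lambda>b. return_pmf (VPair a b)))) \<in> E"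
  using E unfolding eff_class_def by blast

lemma det_alg_id_eff: "det_alg (\<lambda>x. x) \<in> E"
  using E unfolding eff_class_def det_alg_def by blast

lemma seq_alg_eff:
  assumes "A \<in> E" "B \<in> E"
  shows "seq_alg A B \<in> E"
  using bind_alg_eff[OF pair_alg_eff[OF det_alg_id_eff assms(1)] assms(2)]
  by (simp add: seq_alg_def det_alg_def bind_return_pmf bind_assoc_pmf)

lemma precomp_alg_eff:
  assumes "det_alg g \<in> E" "A \<in> E"
  shows "precomp_alg g A \<in> E"
  using bind_alg_eff[OF assms] by (simp add: precomp_alg_def det_alg_def bind_return_pmf)

lemma det_alg_comp_eff:
  assumes "det_alg g \<in> E" "det_alg h \<in> E"
  shows "det_alg (\<lambda>x. h (g x)) \<in> E"
  using precomp_alg_eff[OF assms] by (simp add: precomp_alg_def det_alg_def)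

lemma det_alg_vfst_eff: "det_alg g \<in> E \<Longrightarrow> det_alg (\<lambda>x. vfst (g x)) \<in> E"
  using det_alg_comp_eff[of g vfst] E unfolding eff_class_def det_alg_def by blast

lemma det_alg_vsnd_eff: "det_alg g \<in> E \<Longrightarrow> det_alg (\<lambda>x. vsnd (g x)) \<in> E"
  using det_alg_comp_eff[of g vsnd] E unfolding eff_class_def det_alg_def by blast

lemma det_alg_VPair_eff:
  assumes "det_alg g \<in> E" "det_alg h \<in> E"
  shows "det_alg (\<lambda>x. VPair (g x) (h x)) \<in> E"
  using pair_alg_eff[OF assms] by (simp add: det_alg_def bind_return_pmf)

lemma det_alg_if_eff:
  "det_alg g \<in> E \<Longrightarrow> det_alg h \<in> E \<Longrightarrow> det_alg (\<lambda>x. if b then g x else h x) \<in> E"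
  by (cases b) simp_all

lemmas alg_eff_intros = seq_alg_eff precomp_alg_eff det_alg_id_eff
  det_alg_vfst_eff det_alg_vsnd_eff det_alg_VPair_eff det_alg_if_eff

end

(* pk encodes (pk1, pk2, bk). *)
definition hybrid :: "scheme \<Rightarrow> bridge \<Rightarrow> alg \<Rightarrow> alg \<Rightarrow> bool \<Rightarrow> bool \<Rightarrow> alg" where
  "hybrid S1 B A1 A2 b1 b2 n pk =
     bind_pmf (A1 n pk) (\<lambda>out.
     bind_pmf (Enc S1 n (VPair (vfst pk) (if b1 then vsnd (vfst out) else vfst (vfst out)))) (\<lambda>a.
     bind_pmf (Enc S1 n (VPair (vfst pk) (if b2 then vsnd (vfst out) else vfst (vfst out)))) (\<lambda>c.
     bind_pmf (fmap B n (VPair (vsnd (vsnd pk)) c)) (\<lambda>c2.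
     A2 n (VPair (vsnd out) (VPair a c2))))))"

lemma ind_exp_assoc_scheme:
  "ind_exp (assoc_scheme S1 S2 B) A1 A2 b n = bind_pmf (bridge_F S1 B n) (hybrid S1 B A1 A2 b b n)"
  unfolding ind_exp_def assoc_scheme_def bridge_F_def hybrid_def
  by (simp add: bind_map_pmf case_prod_beta bind_assoc_pmf bind_return_pmf)

lemma hybrid_eff:
  assumes "eff_class E" "Enc S1 \<in> E" "fmap B \<in> E" "A1 \<in> E" "A2 \<in> E"
  shows "hybrid S1 B A1 A2 b1 b2 \<in> E"
proof -
  let ?msg = "\<lambda>b out. if b then vsnd (vfst out) else vfst (vfst out)"
  have "hybrid S1 B A1 A2 b1 b2 =
    seq_alg A1
     (seq_alg (precomp_alg (\<lambda>x. VPair (vfst (vfst x)) (?msg b1 (vsnd x))) (Enc S1))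
     (seq_alg (precomp_alg (\<lambda>x. VPair (vfst (vfst (vfst x))) (?msg b2 (vsnd (vfst x)))) (Enc S1))
     (seq_alg (precomp_alg (\<lambda>x. VPair (vsnd (vsnd (vfst (vfst (vfst x))))) (vsnd x)) (fmap B))
      (precomp_alg (\<lambda>x. VPair (vsnd (vsnd (vfst (vfst (vfst x)))))
          (VPair (vsnd (vfst (vfst x))) (vsnd x))) A2))))"
    by (simp add: fun_eq_iff hybrid_def seq_alg_def precomp_alg_def cong: if_cong)
  then show ?thesis
    using assms by (auto intro!: alg_eff_intros)
qed

(* Adversaries against S1 simulating the hybrids: pk1 is completed to a full public key sampled
   by Af, and the challenge ciphertext is placed in the plain (resp. bridged) component, the
   other component being encrypted by the adversary itself. *)
definition sim_choose :: "alg \<Rightarrow> alg \<Rightarrow> alg" where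
  "sim_choose Af A1 n pk =
     bind_pmf (Af n pk) (\<lambda>pk'.
     bind_pmf (A1 n pk') (\<lambda>out.
     return_pmf (VPair (vfst out) (VPair out pk'))))"

definition sim_guess_plain :: "scheme \<Rightarrow> bridge \<Rightarrow> alg \<Rightarrow> alg" where
  "sim_guess_plain S1 B A2 n y = (let out = vfst (vfst y); pk' = vsnd (vfst y) in
     bind_pmf (Enc S1 n (VPair (vfst pk') (vfst (vfst out)))) (\<lambda>c.
     bind_pmf (fmap B n (VPair (vsnd (vsnd pk')) c)) (\<lambda>c2.
     A2 n (VPair (vsnd out) (VPair (vsnd y) c2)))))"

definition sim_guess_bridged :: "scheme \<Rightarrow> bridge \<Rightarrow> alg \<Rightarrow> alg" where
  "sim_guess_bridged S1 B A2 n y = (let out = vfst (vfst y); pk' = vsnd (vfst y) in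
     bind_pmf (Enc S1 n (VPair (vfst pk') (vsnd (vfst out)))) (\<lambda>a.
     bind_pmf (fmap B n (VPair (vsnd (vsnd pk')) (vsnd y))) (\<lambda>c2.
     A2 n (VPair (vsnd out) (VPair a c2)))))"

lemma sim_choose_eff:
  assumes "eff_class E" "Af \<in> E" "A1 \<in> E"
  shows "sim_choose Af A1 \<in> E"
proof -
  have "sim_choose Af A1 = seq_alg Af (seq_alg (precomp_alg vsnd A1)
      (det_alg (\<lambda>x. VPair (vfst (vsnd x)) (VPair (vsnd x) (vsnd (vfst x))))))"
    by (simp add: fun_eq_iff sim_choose_def seq_alg_def precomp_alg_def det_alg_def)
  then show ?thesis
    using assms by (auto intro!: alg_eff_intros)
qed

lemma sim_guess_plain_eff:
  assumes "eff_class E" "Enc S1 \<in> E" "fmap B \<in> E" "A2 \<in> E"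
  shows "sim_guess_plain S1 B A2 \<in> E"
proof -
  have "sim_guess_plain S1 B A2 =
    seq_alg (precomp_alg (\<lambda>y. VPair (vfst (vsnd (vfst y))) (vfst (vfst (vfst (vfst y))))) (Enc S1))
     (seq_alg (precomp_alg (\<lambda>y. VPair (vsnd (vsnd (vsnd (vfst (vfst y))))) (vsnd y)) (fmap B))
      (precomp_alg (\<lambda>y. VPair (vsnd (vfst (vfst (vfst (vfst y)))))
          (VPair (vsnd (vfst (vfst y))) (vsnd y))) A2))"
    by (simp add: fun_eq_iff sim_guess_plain_def seq_alg_def precomp_alg_def Let_def)
  then show ?thesis
    using assms by (auto intro!: alg_eff_intros)
qed

lemma sim_guess_bridged_eff:
  assumes "eff_class E" "Enc S1 \<in> E" "fmap B \<in> E" "A2 \<in> E"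
  shows "sim_guess_bridged S1 B A2 \<in> E"
proof -
  have "sim_guess_bridged S1 B A2 =
    seq_alg (precomp_alg (\<lambda>y. VPair (vfst (vsnd (vfst y))) (vsnd (vfst (vfst (vfst y))))) (Enc S1))
     (seq_alg (precomp_alg (\<lambda>y. VPair (vsnd (vsnd (vsnd (vfst (vfst y))))) (vsnd (vfst y)))
        (fmap B))
      (precomp_alg (\<lambda>y. VPair (vsnd (vfst (vfst (vfst (vfst y)))))
          (VPair (vsnd (vfst y)) (vsnd y))) A2))"
    by (simp add: fun_eq_iff sim_guess_bridged_def seq_alg_def precomp_alg_def Let_def)
  then show ?thesis
    using assms by (auto intro!: alg_eff_intros)
qed

lemma ind_exp_sim_choose:
  assumes Y: "map_pmf vfst Y = PK1 S1 n"
    and Af: "\<And>x. x \<in> set_pmf (PK1 S1 n) \<Longrightarrow> Af n x = cond_pmf Y {y. vfst y = x}"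
  shows "ind_exp S1 (sim_choose Af A1) A2 b n =
    bind_pmf Y (\<lambda>pk'.
    bind_pmf (A1 n pk') (\<lambda>out.
    bind_pmf (Enc S1 n (VPair (vfst pk') (if b then vsnd (vfst out) else vfst (vfst out)))) (\<lambda>ct.
    A2 n (VPair (VPair out pk') ct))))"
    (is "_ = bind_pmf _ ?K")
proof -
  have fiber: "vfst pk' = pk" if "pk \<in> set_pmf (PK1 S1 n)" "pk' \<in> set_pmf (Af n pk)" for pk pk'
    using that(2) unfolding Af[OF that(1)] by (rule set_cond_pmf_fiber[OF that(1)[folded Y]])
  have "ind_exp S1 (sim_choose Af A1) A2 b n =
    bind_pmf (PK1 S1 n) (\<lambda>pk. bind_pmf (Af n pk) (\<lambda>pk'.
    bind_pmf (A1 n pk') (\<lambda>out.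
    bind_pmf (Enc S1 n (VPair pk (if b then vsnd (vfst out) else vfst (vfst out)))) (\<lambda>ct.
    A2 n (VPair (VPair out pk') ct)))))"
    unfolding ind_exp_def sim_choose_def PK1_def
    by (simp add: bind_map_pmf bind_assoc_pmf bind_return_pmf case_prod_unfold cong: if_cong)
  also have "\<dots> = bind_pmf (PK1 S1 n) (\<lambda>pk. bind_pmf (Af n pk) ?K)"
  proof (rule bind_pmf_cong[OF refl], rule bind_pmf_cong[OF refl])
    fix pk pk' assume "pk \<in> set_pmf (PK1 S1 n)" "pk' \<in> set_pmf (Af n pk)"
    then have "pk = vfst pk'" by (simp add: fiber)
    then show "bind_pmf (A1 n pk') (\<lambda>out.
        bind_pmf (Enc S1 n (VPair pk (if b then vsnd (vfst out) else vfst (vfst out)))) (\<lambda>ct.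
        A2 n (VPair (VPair out pk') ct))) = ?K pk'"
      by (simp only:)
  qed
  also have "\<dots> = bind_pmf Y ?K"
    unfolding Y[symmetric] using Af by (rule bind_cond_pmf_fibers) (simp add: Y)
  finally show ?thesis .
qed

lemma ind_exp_sim_guess_plain:
  assumes "map_pmf vfst Y = PK1 S1 n"
    and "\<And>x. x \<in> set_pmf (PK1 S1 n) \<Longrightarrow> Af n x = cond_pmf Y {y. vfst y = x}"
  shows "ind_exp S1 (sim_choose Af A1) (sim_guess_plain S1 B A2) b n =
    bind_pmf Y (hybrid S1 B A1 A2 b False n)"
  by (simp add: ind_exp_sim_choose[where Af = Af, OF assms] hybrid_def[abs_def]
      sim_guess_plain_def Let_def)

lemma ind_exp_sim_guess_bridged:
  assumes "map_pmf vfst Y = PK1 S1 n"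
    and "\<And>x. x \<in> set_pmf (PK1 S1 n) \<Longrightarrow> Af n x = cond_pmf Y {y. vfst y = x}"
  shows "ind_exp S1 (sim_choose Af A1) (sim_guess_bridged S1 B A2) b n =
    bind_pmf Y (hybrid S1 B A1 A2 True b n)"
  by (simp add: ind_exp_sim_choose[where Af = Af, OF assms] hybrid_def[abs_def]
      sim_guess_bridged_def Let_def bind_commute_pmf[of "Enc S1 n (VPair _ (if b then _ else _))"])

lemma negligible_hybrid_diff_sampled_keys:
  assumes E: "eff_class E" and S1: "ind_cpa E S1"
    and eff: "Enc S1 \<in> E" "fmap B \<in> E" "A1 \<in> E" "A2 \<in> E" "Af \<in> E"
    and proj: "\<And>n. map_pmf vfst (Ft n) = PK1 S1 n"
    and sampler: "\<And>n x. x \<in> set_pmf (PK1 S1 n) \<Longrightarrow> Af n x = cond_pmf (Ft n) {y. vfst y = x}"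
  shows "negligible (\<lambda>n. \<bar>pmf (bind_pmf (Ft n) (hybrid S1 B A1 A2 False False n)) vone -
    pmf (bind_pmf (Ft n) (hybrid S1 B A1 A2 True True n)) vone\<bar>)"
proof -
  have S1_secure: "negligible (\<lambda>n. \<bar>pmf (ind_exp S1 A1' A2' False n) vone -
      pmf (ind_exp S1 A1' A2' True n) vone\<bar>)" if "A1' \<in> E" "A2' \<in> E" for A1' A2'
    using S1 that unfolding ind_cpa_def by blast
  let ?p = "\<lambda>b1 b2 n. pmf (bind_pmf (Ft n) (hybrid S1 B A1 A2 b1 b2 n)) vone"
  have plain: "negligible (\<lambda>n. \<bar>?p False False n - ?p True False n\<bar>)"
    using S1_secure[OF sim_choose_eff[OF E eff(5,3)] sim_guess_plain_eff[OF E eff(1,2,4)]]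
    by (simp add: ind_exp_sim_guess_plain[where Af = Af, OF proj sampler])
  have bridged: "negligible (\<lambda>n. \<bar>?p True False n - ?p True True n\<bar>)"
    using S1_secure[OF sim_choose_eff[OF E eff(5,3)] sim_guess_bridged_eff[OF E eff(1,2,4)]]
    by (simp add: ind_exp_sim_guess_bridged[where Af = Af, OF proj sampler])
  show ?thesis
    by (rule negligible_abs_diff_trans[OF plain bridged])
qed

theorem theorem2:
  assumes "eff_class E"
    and "enc_scheme E S1" and "enc_scheme E S2"
    and "is_bridge E S1 S2 B"
    and "ind_cpa E S1"
    and "PK1_ensemble S1 Ft"
    and "constructible_on_fibers E S1 Ft"
    and "comp_indist E (bridge_F S1 B) Ft"
  shows "bridge_ind_cpa E S1 S2 B"
  unfolding bridge_ind_cpa_def ind_cpa_def ind_exp_assoc_scheme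
proof (intro ballI)
  fix A1 A2 assume A1: "A1 \<in> E" and A2: "A2 \<in> E"
  have Enc1: "Enc S1 \<in> E" using assms(2) unfolding enc_scheme_def by blast
  have f: "fmap B \<in> E" using assms(4) unfolding is_bridge_def by blast
  have proj: "map_pmf vfst (Ft n) = PK1 S1 n" for n
    using assms(6) unfolding PK1_ensemble_def by blast
  obtain Af where Af: "Af \<in> E"
    and sampler: "\<And>n x. x \<in> set_pmf (PK1 S1 n) \<Longrightarrow> Af n x = cond_pmf (Ft n) {y. vfst y = x}"
    using assms(7) unfolding constructible_on_fibers_def by blast
  let ?p = "\<lambda>X b n. pmf (bind_pmf (X n) (hybrid S1 B A1 A2 b b n)) vone"
  have swap_keys: "negligible (\<lambda>n. \<bar>?p (bridge_F S1 B) b n - ?p Ft b n\<bar>)" for b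
    using assms(8) hybrid_eff[OF assms(1) Enc1 f A1 A2] unfolding comp_indist_def by blast
  have swap_back: "negligible (\<lambda>n. \<bar>?p Ft True n - ?p (bridge_F S1 B) True n\<bar>)"
    using swap_keys[of True] by (simp add: abs_minus_commute)
  show "negligible (\<lambda>n. \<bar>?p (bridge_F S1 B) False n - ?p (bridge_F S1 B) True n\<bar>)"
    using negligible_hybrid_diff_sampled_keys[OF assms(1,5) Enc1 f A1 A2 Af proj sampler]
    by (intro negligible_abs_diff_trans[OF swap_keys negligible_abs_diff_trans[OF _ swap_back]])
qed

end
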